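(* Let $\rho:E\to B$ be a universal stream covering, where $B$ is a path-ordered stream. The following are equivalent: (1) the preorder $\leqslant_E$ is antisymmetric; (2) every stream map $\vec{\mathbb{S}}\to B$ whose underlying continuous map $\mathbb{S}\to UB$ is null-homotopic is constant.
   Context: A circulation on a space $X$ assigns to each open $V\subset X$ a preorder $\leqslant_V$ on $V$ such that for every collection $\mathcal{O}$ of open sets, $\leqslant_{\bigcup\mathcal{O}}$ is the preorder with smallest graph containing $\bigcup_{V\in\mathcal{O}}\mathrm{graph}(\leqslant_V)$. A stream is a space with a circulation ($\leqslant_X$ is the preorder on $X$ itself); a stream map $f:X\to Y$ is continuous with $f(x)\leqslant_V f(y)$ whenever $x\leqslant_{f^{-1}V}y$ for all open $V\subset Y$. $U$ denotes the forgetful functor to spaces. $\vec\square[1]$ is $[0,1]$ with circulation $x\leqslant_V y$ iff $x\le y$ and $[x,y]\subset V$; a dipath on a stream $X$ is a stream map $\vec\square[1]\to X$. $X$ is path-ordered if whenever $V\subset X$ is open and $x\leqslant_V y$, there is a dipath from $x$ to $y$ with image in $V$. $\vec{\mathbb{S}}$ is the unit circle $\mathbb{S}\subset\mathbb{C}$ with circulation: $z\leqslant_V z'$ iff there exist reals $\theta\le\theta'$ with $z=e^{i\theta}$, $z'=e^{i\theta'}$ and $e^{i[\theta,\theta']}\subset V$. An open substream of $X$ is an open set $V$ with circulation $W\mapsto\leqslant_W$ ($W\subset V$ open). A stream covering is a surjective stream map $\rho:E\to B$ such that $B$ is covered by open substreams whose preimages are disjoint unions of open substreams each mapped by $\rho$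 isomorphically (as streams) onto the corresponding open substream; it is universal if $U\rho$ is a universal covering of spaces. *)

theory Defs
  imports "HOL-Analysis.Analysis"
begin

text \<open>A stream is represented by a topology X together with a circulation
  C, where C V is the graph of the preorder on the open set V.\<close>

definition smallest_preorder_on :: "'a set \<Rightarrow> ('a \<times> 'a) set \<Rightarrow> ('a \<times> 'a) set" where
  "smallest_preorder_on A R = Id_on A \<union> R\<^sup>+"

definition is_circulation :: "'a topology \<Rightarrow> ('a set \<Rightarrow> ('a \<times> 'a) set) \<Rightarrow> bool" where
  "is_circulation X C \<longleftrightarrow>
     (\<forall>V. openin X V \<longrightarrow> C V \<subseteq> V \<times> V \<and> refl_on V (C V) \<and> trans (C V)) \<and>
     (\<forall>\<O>. (\<forall>V\<in>\<O>. openin X V) \<longrightarrow>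
        C (\<Union>\<O>) = smallest_preorder_on (\<Union>\<O>) (\<Union>V\<in>\<O>. C V))"

abbreviation is_stream :: "'a topology \<Rightarrow> ('a set \<Rightarrow> ('a \<times> 'a) set) \<Rightarrow> bool" where
  "is_stream X C \<equiv> is_circulation X C"

definition stream_map ::
  "'a topology \<Rightarrow> ('a set \<Rightarrow> ('a \<times> 'a) set) \<Rightarrow> 'b topology \<Rightarrow> ('b set \<Rightarrow> ('b \<times> 'b) set)
   \<Rightarrow> ('a \<Rightarrow> 'b) \<Rightarrow> bool" where
  "stream_map X C Y D f \<longleftrightarrow> continuous_map X Y f \<and>
     (\<forall>V x y. openin Y V \<longrightarrow> (x, y) \<in> C (topspace X \<inter> f -` V) \<longrightarrow> (f x, f y) \<in> D V)"

definition stream_iso ::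
  "'a topology \<Rightarrow> ('a set \<Rightarrow> ('a \<times> 'a) set) \<Rightarrow> 'b topology \<Rightarrow> ('b set \<Rightarrow> ('b \<times> 'b) set)
   \<Rightarrow> ('a \<Rightarrow> 'b) \<Rightarrow> bool" where
  "stream_iso X C Y D f \<longleftrightarrow> (\<exists>g. stream_map X C Y D f \<and> stream_map Y D X C g \<and>
     (\<forall>x\<in>topspace X. g (f x) = x) \<and> (\<forall>y\<in>topspace Y. f (g y) = y))"

definition dint_top :: "real topology" where
  "dint_top = top_of_set {0..1}"

definition dint_circ :: "real set \<Rightarrow> (real \<times> real) set" where
  "dint_circ V = {(x, y). x \<le> y \<and> {x..y} \<subseteq> V}"

definition dipath ::
  "'a topology \<Rightarrow> ('a set \<Rightarrow> ('a \<times> 'a) set) \<Rightarrow> (real \<Rightarrow> 'a) \<Rightarrow> bool" where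
  "dipath X C \<gamma> \<longleftrightarrow> stream_map dint_top dint_circ X C \<gamma>"

definition path_ordered :: "'a topology \<Rightarrow> ('a set \<Rightarrow> ('a \<times> 'a) set) \<Rightarrow> bool" where
  "path_ordered X C \<longleftrightarrow> (\<forall>V x y. openin X V \<longrightarrow> (x, y) \<in> C V \<longrightarrow>
     (\<exists>\<gamma>. dipath X C \<gamma> \<and> \<gamma> 0 = x \<and> \<gamma> 1 = y \<and> \<gamma> ` {0..1} \<subseteq> V))"

definition circle_top :: "complex topology" where
  "circle_top = top_of_set (sphere 0 1)"

definition circle_circ :: "complex set \<Rightarrow> (complex \<times> complex) set" where
  "circle_circ V = {(z, z'). \<exists>\<theta> \<theta>'. \<theta> \<le> \<theta>' \<and> z = exp (\<i> * of_real \<theta>) \<and>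
      z' = exp (\<i> * of_real \<theta>') \<and> (\<lambda>t. exp (\<i> * of_real t)) ` {\<theta>..\<theta>'} \<subseteq> V}"

text \<open>Stream coverings; the open substream on U has topology
  subtopology X U and circulation W \<mapsto> C W (for open W \<subseteq> U).\<close>
definition stream_covering ::
  "'e topology \<Rightarrow> ('e set \<Rightarrow> ('e \<times> 'e) set) \<Rightarrow> 'b topology \<Rightarrow> ('b set \<Rightarrow> ('b \<times> 'b) set)
   \<Rightarrow> ('e \<Rightarrow> 'b) \<Rightarrow> bool" where
  "stream_covering E CE B CB \<rho> \<longleftrightarrow> stream_map E CE B CB \<rho> \<and> \<rho> ` topspace E = topspace B \<and>
     (\<forall>b\<in>topspace B. \<exists>V. b \<in> V \<and> openin B V \<and>
        (\<exists>\<U>. \<Union>\<U> = topspace E \<inter> \<rho> -` V \<and> pairwise disjnt \<U> \<and>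
           (\<forall>U\<in>\<U>. openin E U \<and> stream_iso (subtopology E U) CE (subtopology B V) CB \<rho>)))"

definition covering_map :: "'e topology \<Rightarrow> 'b topology \<Rightarrow> ('e \<Rightarrow> 'b) \<Rightarrow> bool" where
  "covering_map E B p \<longleftrightarrow> continuous_map E B p \<and> p ` topspace E = topspace B \<and>
     (\<forall>b\<in>topspace B. \<exists>V. b \<in> V \<and> openin B V \<and>
        (\<exists>\<U>. \<Union>\<U> = topspace E \<inter> p -` V \<and> pairwise disjnt \<U> \<and>
           (\<forall>U\<in>\<U>. openin E U \<and> homeomorphic_map (subtopology E U) (subtopology B V) p)))"

definition simply_connected_space :: "'a topology \<Rightarrow> bool" where
  "simply_connected_space X \<longleftrightarrow> path_connected_space X \<and>
     (\<forall>p. pathin X p \<and> p 1 = p 0 \<longrightarrow>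
        homotopic_with (\<lambda>r. r 1 = r 0) (top_of_set {0..1}) X p (\<lambda>t. p 0))"

definition universal_covering_map :: "'e topology \<Rightarrow> 'b topology \<Rightarrow> ('e \<Rightarrow> 'b) \<Rightarrow> bool" where
  "universal_covering_map E B p \<longleftrightarrow> covering_map E B p \<and> simply_connected_space E"

definition universal_stream_covering ::
  "'e topology \<Rightarrow> ('e set \<Rightarrow> ('e \<times> 'e) set) \<Rightarrow> 'b topology \<Rightarrow> ('b set \<Rightarrow> ('b \<times> 'b) set)
   \<Rightarrow> ('e \<Rightarrow> 'b) \<Rightarrow> bool" where
  "universal_stream_covering E CE B CB \<rho> \<longleftrightarrow>
     stream_covering E CE B CB \<rho> \<and> universal_covering_map E B \<rho>"

definition null_homotopic :: "'a topology \<Rightarrow> 'b topology \<Rightarrow> ('a \<Rightarrow> 'b) \<Rightarrow> bool" where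
  "null_homotopic X Y f \<longleftrightarrow> (\<exists>c. homotopic_with (\<lambda>_. True) X Y f (\<lambda>_. c))"

end

theory Submission
  imports Defs
begin

(* Lift loops along the covering rho : E -> B.
   (1) => (2): for a stream map f from the directed circle that is null-homotopic, the lift q
   of the loop t |-> f(e^{2 pi i t}) is closed (homotopy lifting), and it is increasing for the
   circulation of E, because on each sheet rho is an isomorphism of streams and f is directed.
   So q(0) <= q(t) <= q(1) = q(0), antisymmetry makes q constant, hence f is constant.
   (2) => (1): the circulation of E on all of E is generated by those of the sheets, so from
   e <= e' <= e with e ~= e' we get, using that B is path-ordered, a closed path L in E through
   e and e' whose image in B is directed. It induces a stream map on the directed circle, which
   is null-homotopic since E is simply connected, hence constant by (2); by unique lifting L is
   then constant, contradicting e ~= e'. *)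

section \<open>Lifting along covering maps of general topological spaces\<close>

definition evenly_covered :: "'e topology \<Rightarrow> 'b topology \<Rightarrow> ('e \<Rightarrow> 'b) \<Rightarrow> 'b set \<Rightarrow> 'e set set \<Rightarrow> bool"
  where "evenly_covered E B p V \<U> \<longleftrightarrow> openin B V \<and> \<Union>\<U> = topspace E \<inter> p -` V \<and> pairwise disjnt \<U> \<and>
      (\<forall>U\<in>\<U>. openin E U \<and> homeomorphic_map (subtopology E U) (subtopology B V) p)"

lemma covering_map_evenly_covered:
  assumes "covering_map E B p" "b \<in> topspace B"
  obtains V \<U> where "b \<in> V" "evenly_covered E B p V \<U>"
  using assms unfolding covering_map_def evenly_covered_def by metis

lemma evenly_covered_section:
  assumes "evenly_covered E B p V \<U>" "U \<in> \<U>"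
  obtains g where "continuous_map (subtopology B V) (subtopology E U) g"
    "\<And>x. x \<in> U \<Longrightarrow> g (p x) = x" "\<And>y. y \<in> V \<Longrightarrow> p (g y) = y"
proof -
  have o: "openin B V" "openin E U" and h: "homeomorphic_map (subtopology E U) (subtopology B V) p"
    using assms unfolding evenly_covered_def by auto
  have tU: "topspace (subtopology E U) = U" and tV: "topspace (subtopology B V) = V"
    using o openin_subset by (metis topspace_subtopology_subset)+
  from h obtain g where "homeomorphic_maps (subtopology E U) (subtopology B V) p g"
    using homeomorphic_map_maps by blast
  then show ?thesis using that tU tV unfolding homeomorphic_maps_def by metis
qed

lemma connected_lift_in_sheet:
  assumes ev: "evenly_covered E B p V \<U>" and U0: "U0 \<in> \<U>"
    and X: "connected_space X" and h: "continuous_map X E h"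
    and hV: "\<And>x. x \<in> topspace X \<Longrightarrow> p (h x) \<in> V"
    and x0: "x0 \<in> topspace X" "h x0 \<in> U0"
    and x: "x \<in> topspace X"
  shows "h x \<in> U0"
proof -
  let ?T = "{x \<in> topspace X. h x \<in> U0}"
  have oU: "\<And>U. U \<in> \<U> \<Longrightarrow> openin E U" using ev unfolding evenly_covered_def by blast
  have "openin X {x \<in> topspace X. h x \<in> \<Union>(\<U> - {U0})}"
    by (rule openin_continuous_map_preimage[OF h]) (use oU in blast)
  moreover have "topspace X - ?T = {x \<in> topspace X. h x \<in> \<Union>(\<U> - {U0})}"
  proof -
    have "h x \<in> \<Union>\<U>" if "x \<in> topspace X" for x
      using ev that hV h unfolding evenly_covered_def by (auto dest: continuous_map_image_subset_topspace)
    moreover have "h x \<notin> U0" if "h x \<in> U" "U \<in> \<U>" "U \<noteq> U0" for x U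
      using ev that U0 unfolding evenly_covered_def pairwise_def disjnt_def by blast
    ultimately show ?thesis by blast
  qed
  ultimately have "closedin X ?T" unfolding closedin_def by auto
  moreover have "openin X ?T" using openin_continuous_map_preimage[OF h oU[OF U0]] .
  ultimately have "?T = {} \<or> ?T = topspace X" using X unfolding connected_space_clopen_in by blast
  with x0 x show ?thesis by blast
qed

lemma covering_lift_unique:
  assumes cov: "covering_map E B p" and X: "connected_space X"
    and h1: "continuous_map X E h1" and h2: "continuous_map X E h2"
    and eq: "\<And>x. x \<in> topspace X \<Longrightarrow> p (h1 x) = p (h2 x)"
    and base: "base \<in> topspace X" "h1 base = h2 base"
    and x: "x \<in> topspace X"
  shows "h1 x = h2 x"
proof -
  let ?T = "{x \<in> topspace X. h1 x = h2 x}"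
  have local: "\<exists>N. openin X N \<and> x \<in> N \<and> (N \<subseteq> ?T \<or> N \<subseteq> topspace X - ?T)"
    if x: "x \<in> topspace X" for x
  proof -
    have E: "h1 x \<in> topspace E" "h2 x \<in> topspace E"
      using h1 h2 x by (auto dest: continuous_map_image_subset_topspace)
    then have "p (h1 x) \<in> topspace B" using cov unfolding covering_map_def
      by (auto dest: continuous_map_image_subset_topspace)
    then obtain V \<U> where bV: "p (h1 x) \<in> V" and ev: "evenly_covered E B p V \<U>"
      using cov covering_map_evenly_covered by metis
    have "h1 x \<in> \<Union>\<U>" "h2 x \<in> \<Union>\<U>" using ev bV eq[OF x] E unfolding evenly_covered_def by auto
    then obtain U1 U2 where U: "U1 \<in> \<U>" "U2 \<in> \<U>" "h1 x \<in> U1" "h2 x \<in> U2" by blast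
    let ?N = "{y \<in> topspace X. h1 y \<in> U1} \<inter> {y \<in> topspace X. h2 y \<in> U2}"
    have oN: "openin X ?N"
      using ev U unfolding evenly_covered_def
      by (intro openin_Int openin_continuous_map_preimage[OF h1] openin_continuous_map_preimage[OF h2]) auto
    show ?thesis
    proof (cases "U1 = U2")
      case True
      obtain g where g: "\<And>x. x \<in> U1 \<Longrightarrow> g (p x) = x" using evenly_covered_section[OF ev U(1)] by metis
      have "?N \<subseteq> ?T"
      proof safe
        fix y assume "y \<in> topspace X" "h1 y \<in> U1" "h2 y \<in> U2"
        then show "h1 y = h2 y" using g[of "h1 y"] g[of "h2 y"] eq[of y] True by metis
      qed
      then show ?thesis using oN U x by blast
    next
      case False
      then have "disjnt U1 U2" using ev U unfolding evenly_covered_def pairwise_def by blast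
      then have "?N \<subseteq> topspace X - ?T" unfolding disjnt_def by auto
      then show ?thesis using oN U x by blast
    qed
  qed
  have "openin X ?T" by (subst openin_subopen) (use local in blast)
  moreover have "openin X (topspace X - ?T)" by (subst openin_subopen) (use local in blast)
  ultimately have "?T = {} \<or> ?T = topspace X" using X unfolding connected_space_clopen_in closedin_def by auto
  with base x show ?thesis by blast
qed

lemma Lebesgue_number_continuous_map:
  fixes S :: "'a::metric_space set"
  assumes S: "compact S" "S \<noteq> {}" and c: "continuous_map (top_of_set S) X c"
    and W: "\<And>W. W \<in> \<W> \<Longrightarrow> openin X W" and cov: "\<And>x. x \<in> S \<Longrightarrow> \<exists>W\<in>\<W>. c x \<in> W"
  obtains \<delta> where "\<delta> > 0" "\<And>T. T \<subseteq> S \<Longrightarrow> diameter T < \<delta> \<Longrightarrow> \<exists>W\<in>\<W>. \<forall>x\<in>T. c x \<in> W"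
proof -
  let ?C = "{Ob. open Ob \<and> (\<exists>W\<in>\<W>. \<forall>x\<in>S \<inter> Ob. c x \<in> W)}"
  have sub: "S \<subseteq> \<Union>?C"
  proof
    fix x assume x: "x \<in> S"
    then obtain W where W1: "W \<in> \<W>" "c x \<in> W" using cov by blast
    have "openin (top_of_set S) {y \<in> topspace (top_of_set S). c y \<in> W}"
      using openin_continuous_map_preimage[OF c W[OF W1(1)]] .
    then obtain Ob where "open Ob" "{y \<in> topspace (top_of_set S). c y \<in> W} = S \<inter> Ob"
      unfolding openin_open by blast
    then show "x \<in> \<Union>?C" using x W1 by (auto intro!: exI[of _ Ob])
  qed
  then have ne: "?C \<noteq> {}" using S by blast
  have "\<exists>\<delta>>0. \<forall>T. T \<subseteq> S \<longrightarrow> diameter T < \<delta> \<longrightarrow> (\<exists>Ob \<in> ?C. T \<subseteq> Ob)"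
  proof (rule Lebesgue_number_lemma[OF S(1) ne sub])
    show "\<And>Ob. Ob \<in> ?C \<Longrightarrow> open Ob" by blast
  qed blast
  then obtain \<delta> where "0 < \<delta>" and d: "\<And>T. \<lbrakk>T \<subseteq> S; diameter T < \<delta>\<rbrakk> \<Longrightarrow> \<exists>Ob \<in> ?C. T \<subseteq> Ob"
    by blast
  show ?thesis
  proof (rule that[OF \<open>0 < \<delta>\<close>])
    fix T assume "T \<subseteq> S" "diameter T < \<delta>"
    then obtain Ob where "Ob \<in> ?C" "T \<subseteq> Ob" using d by meson
    then show "\<exists>W\<in>\<W>. \<forall>x\<in>T. c x \<in> W" using \<open>T \<subseteq> S\<close> by blast
  qed
qed

lemma continuous_map_glue_intervals:
  fixes a m b :: real
  assumes "a \<le> m" "m \<le> b"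
    and f: "continuous_map (top_of_set {a..m}) X f" and g: "continuous_map (top_of_set {m..b}) X g"
    and fg: "f m = g m"
  shows "continuous_map (top_of_set {a..b}) X (\<lambda>t. if t \<le> m then f t else g t)"
proof (rule continuous_map_cases_le)
  have "{a..b} \<inter> {x \<in> topspace (top_of_set {a..b}). x \<le> m} = {a..m}"
    "{a..b} \<inter> {x \<in> topspace (top_of_set {a..b}). m \<le> x} = {m..b}"
    using assms(1,2) by auto
  then show "continuous_map (subtopology (top_of_set {a..b}) {x \<in> topspace (top_of_set {a..b}). x \<le> m}) X f"
    "continuous_map (subtopology (top_of_set {a..b}) {x \<in> topspace (top_of_set {a..b}). m \<le> x}) X g"
    using f g by (simp_all only: subtopology_subtopology)
qed (use fg in auto)

lemma continuous_map_slices: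
  fixes K :: "real \<times> real \<Rightarrow> 'b"
  assumes K: "continuous_map (top_of_set (S \<times> T)) X K"
  shows "s \<in> S \<Longrightarrow> J \<subseteq> T \<Longrightarrow> continuous_map (top_of_set J) X (\<lambda>t. K (s, t))"
    and "t \<in> T \<Longrightarrow> J \<subseteq> S \<Longrightarrow> continuous_map (top_of_set J) X (\<lambda>s. K (s, t))"
  by (rule continuous_map_compose[OF _ K, unfolded o_def];
      auto intro!: continuous_map_into_subtopology continuous_intros simp: continuous_map_iff_continuous)+

lemma pathin_in_topspace: "pathin E q \<Longrightarrow> t \<in> {0..1} \<Longrightarrow> q t \<in> topspace E"
  unfolding pathin_def using continuous_map_image_subset_topspace by fastforce

lemma lift_extend:
  fixes a b :: real
  assumes ev: "evenly_covered E B p V \<U>" and ab: "0 \<le> a" "a \<le> b"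
    and c: "continuous_map (top_of_set {a..b}) B c" "c ` {a..b} \<subseteq> V"
    and q: "continuous_map (top_of_set {0..a}) E q" "\<And>t. t \<in> {0..a} \<Longrightarrow> p (q t) = c t"
  obtains q' where "continuous_map (top_of_set {0..b}) E q'"
    "\<And>t. t \<in> {0..a} \<Longrightarrow> q' t = q t" "\<And>t. t \<in> {0..b} \<Longrightarrow> p (q' t) = c t"
proof -
  have "q a \<in> topspace E" using continuous_map_image_subset_topspace[OF q(1)] ab by auto
  then have "q a \<in> \<Union>\<U>" using ev q(2)[of a] c(2) ab unfolding evenly_covered_def by auto
  then obtain U where U: "U \<in> \<U>" "q a \<in> U" by blast
  obtain g where g: "continuous_map (subtopology B V) (subtopology E U) g"
    "\<And>x. x \<in> U \<Longrightarrow> g (p x) = x" "\<And>y. y \<in> V \<Longrightarrow> p (g y) = y"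
    using evenly_covered_section[OF ev U(1)] by metis
  have "continuous_map (top_of_set {a..b}) (subtopology B V) c"
    using c by (simp add: continuous_map_in_subtopology image_subset_iff_funcset)
  then have gc: "continuous_map (top_of_set {a..b}) E (g \<circ> c)"
    using continuous_map_compose g(1) continuous_map_in_subtopology by blast
  have "g (c a) = q a" using g(2) U(2) q(2)[of a] ab by force
  then have "continuous_map (top_of_set {0..b}) E (\<lambda>t. if t \<le> a then q t else (g \<circ> c) t)"
    by (intro continuous_map_glue_intervals[OF ab q(1) gc]) auto
  moreover have "p (if t \<le> a then q t else (g \<circ> c) t) = c t" if "t \<in> {0..b}" for t
    using that q(2) g(3) c(2) by (auto simp: image_subset_iff)
  ultimately show ?thesis using that[of "\<lambda>t. if t \<le> a then q t else (g \<circ> c) t"] by auto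
qed

lemma small_subdivision:
  fixes \<delta> c :: real
  assumes "0 < \<delta>" "0 < c"
  obtains N :: nat where "N > 0" "c / real N < \<delta>"
proof -
  obtain n :: nat where n: "c / \<delta> < real n" using reals_Archimedean2 by blast
  moreover have "0 < c / \<delta>" using assms by simp
  ultimately have "n > 0" by linarith
  moreover have "c / real n < \<delta>" using n \<open>n > 0\<close> assms by (simp add: field_simps)
  ultimately show ?thesis using that by blast
qed

lemma covering_path_lift:
  assumes cov: "covering_map E B p" and c: "pathin B c"
    and e: "e \<in> topspace E" "p e = c 0"
  obtains q where "pathin E q" "q 0 = e" "\<And>t. t \<in> {0..1} \<Longrightarrow> p (q t) = c t"
proof -
  let ?W = "{V. \<exists>\<U>. evenly_covered E B p V \<U>}"
  have cts: "continuous_map (top_of_set {0..1}) B c" using c unfolding pathin_def .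
  obtain \<delta> where "\<delta> > 0" and d: "\<And>T. T \<subseteq> {0..1} \<Longrightarrow> diameter T < \<delta> \<Longrightarrow> \<exists>W\<in>?W. \<forall>x\<in>T. c x \<in> W"
  proof (rule Lebesgue_number_continuous_map[OF _ _ cts])
    show "\<exists>W\<in>?W. c x \<in> W" if "x \<in> {0..1}" for x
      using covering_map_evenly_covered[OF cov pathin_in_topspace[OF c that]] by blast
  qed (auto simp: evenly_covered_def)
  then obtain N :: nat where N: "N > 0" "1 / real N < \<delta>"
    using small_subdivision[of \<delta> 1] by auto
  have "\<exists>q. continuous_map (top_of_set {0..real k / N}) E q \<and> q 0 = e \<and> (\<forall>t\<in>{0..real k / N}. p (q t) = c t)"
    if "k \<le> N" for k
    using that
  proof (induction k)
    case 0
    show ?case using e by (intro exI[of _ "\<lambda>_. e"]) auto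
  next
    case (Suc k)
    then obtain q where q: "continuous_map (top_of_set {0..real k / N}) E q" "q 0 = e"
      "\<forall>t\<in>{0..real k / N}. p (q t) = c t" by auto
    let ?a = "real k / N" and ?b = "real (Suc k) / N"
    have ab: "0 \<le> ?a" "?a \<le> ?b" "?b \<le> 1" using Suc.prems N by (auto simp: divide_simps)
    have "diameter {?a..?b} < \<delta>" using ab N by (simp add: diff_divide_distrib[symmetric])
    then obtain V where "V \<in> ?W" and "\<forall>x\<in>{?a..?b}. c x \<in> V"
      using d[of "{?a..?b}"] ab by auto
    then obtain \<U> where ev: "evenly_covered E B p V \<U>" and cV: "c ` {?a..?b} \<subseteq> V" by blast
    have cab: "continuous_map (top_of_set {?a..?b}) B c"
      using ab by (intro continuous_map_from_subtopology_mono[OF cts]) auto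
    obtain q' where "continuous_map (top_of_set {0..?b}) E q'"
      "\<And>t. t \<in> {0..?a} \<Longrightarrow> q' t = q t" "\<And>t. t \<in> {0..?b} \<Longrightarrow> p (q' t) = c t"
      using lift_extend[OF ev ab(1,2) cab cV q(1) q(3)[rule_format]] by blast
    then show ?case using q(2) ab(1) by (intro exI[of _ q']) auto
  qed
  from this[of N] N(1) obtain q where "continuous_map (top_of_set {0..1}) E q" "q 0 = e"
      "\<forall>t\<in>{0..1}. p (q t) = c t"
    by auto
  then show ?thesis using that unfolding pathin_def by blast
qed

lemma continuous_map_local:
  assumes "\<And>x. x \<in> topspace X \<Longrightarrow> \<exists>T. openin X T \<and> x \<in> T \<and> continuous_map (subtopology X T) Y f"
  shows "continuous_map X Y f"
proof -
  obtain T where T: "\<And>x. x \<in> topspace X \<Longrightarrow> openin X (T x) \<and> x \<in> T x \<and> continuous_map (subtopology X (T x)) Y f"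
    using assms by metis
  show ?thesis by (rule pasting_lemma[where I="topspace X" and T=T and f="\<lambda>_. f"]) (use T in auto)
qed

text \<open>If every line of a continuous family of lifts starts inside one sheet over V and stays over
  V on [a,b], the family of end points at b is continuous because it is a section of p applied
  to K(-, b).\<close>
lemma lift_family_step:
  fixes K :: "real \<times> real \<Rightarrow> 'b" and r :: "real \<Rightarrow> real \<Rightarrow> 'e"
  assumes ev: "evenly_covered E B p V \<U>" and J: "connected_space (top_of_set J)" and ab: "a \<le> b"
    and r: "\<And>s. s \<in> J \<Longrightarrow> continuous_map (top_of_set {a..b}) E (r s)"
    and rK: "\<And>s t. s \<in> J \<Longrightarrow> t \<in> {a..b} \<Longrightarrow> p (r s t) = K (s, t)"
    and KV: "\<And>s t. s \<in> J \<Longrightarrow> t \<in> {a..b} \<Longrightarrow> K (s, t) \<in> V"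
    and ra: "continuous_map (top_of_set J) E (\<lambda>s. r s a)"
    and Kb: "continuous_map (top_of_set J) B (\<lambda>s. K (s, b))"
  shows "continuous_map (top_of_set J) E (\<lambda>s. r s b)"
proof (cases "J = {}")
  case True
  then show ?thesis by (simp add: continuous_map_def)
next
  case False
  then obtain s0 where s0: "s0 \<in> J" by blast
  have ab': "a \<in> {a..b}" "b \<in> {a..b}" using ab by auto
  have "r s0 a \<in> topspace E" using continuous_map_image_subset_topspace[OF r[OF s0]] ab' by auto
  then have "r s0 a \<in> \<Union>\<U>" using ev rK[OF s0 ab'(1)] KV[OF s0 ab'(1)] unfolding evenly_covered_def by auto
  then obtain U0 where U0: "U0 \<in> \<U>" "r s0 a \<in> U0" by blast
  obtain g where g: "continuous_map (subtopology B V) (subtopology E U0) g" "\<And>x. x \<in> U0 \<Longrightarrow> g (p x) = x"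
    using evenly_covered_section[OF ev U0(1)] by metis
  have start: "r s a \<in> U0" if "s \<in> J" for s
    using connected_lift_in_sheet[OF ev U0(1) J ra, of s0] rK KV ab' s0 U0(2) that by auto
  have rb: "r s b = g (K (s, b))" if s: "s \<in> J" for s
  proof -
    have "r s b \<in> U0"
      using connected_lift_in_sheet[OF ev U0(1) _ r[OF s], of a b] rK[OF s] KV[OF s] ab' start[OF s] by auto
    then show ?thesis using g(2) rK[OF s ab'(2)] by metis
  qed
  have "continuous_map (top_of_set J) (subtopology B V) (\<lambda>s. K (s, b))"
    using Kb KV ab' by (auto simp: continuous_map_in_subtopology)
  then have "continuous_map (top_of_set J) E (g \<circ> (\<lambda>s. K (s, b)))"
    using continuous_map_compose[OF _ g(1)] continuous_map_in_subtopology by blast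
  then show ?thesis by (rule continuous_map_eq) (use rb in simp)
qed

lemma diameter_strip_le:
  fixes J :: "real set"
  assumes "J \<subseteq> {c - h..c + h}" "0 \<le> h" "b - a \<le> h"
  shows "diameter (J \<times> {a..b}) \<le> 3 * h"
proof (rule diameter_le)
  fix x y assume xy: "x \<in> J \<times> {a..b}" "y \<in> J \<times> {a..b}"
  then obtain s t s' t' where st: "x = (s, t)" "y = (s', t')" by fastforce
  have "s \<in> {c - h..c + h}" "s' \<in> {c - h..c + h}" using xy assms(1) unfolding st by auto
  then have "\<bar>s - s'\<bar> \<le> 2 * h" "\<bar>t - t'\<bar> \<le> h" using xy assms(3) unfolding st by (auto simp: abs_le_iff)
  then have "norm (s - s', t - t') \<le> 3 * h" using norm_Pair_le[of "s - s'" "t - t'"] by simp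
  then show "norm (x - y) \<le> 3 * h" using st by simp
qed (use assms in simp)

lemma lift_family_on_strips:
  fixes K :: "real \<times> real \<Rightarrow> 'b" and r :: "real \<Rightarrow> real \<Rightarrow> 'e" and N :: nat
  assumes J: "connected_space (top_of_set J)" "J \<subseteq> {0..1}" and N: "N > 0"
    and K: "continuous_map (top_of_set ({0..1} \<times> {0..1})) B K"
    and r: "\<And>s. s \<in> {0..1} \<Longrightarrow> pathin E (r s)"
    and rK: "\<And>s t. s \<in> {0..1} \<Longrightarrow> t \<in> {0..1} \<Longrightarrow> p (r s t) = K (s, t)"
    and r0: "continuous_map (top_of_set J) E (\<lambda>s. r s 0)"
    and strips: "\<And>i. i < N \<Longrightarrow>
      \<exists>V \<U>. evenly_covered E B p V \<U> \<and> (\<forall>x\<in>J \<times> {real i / N..real (Suc i) / N}. K x \<in> V)"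
  shows "continuous_map (top_of_set J) E (\<lambda>s. r s 1)"
proof -
  have "continuous_map (top_of_set J) E (\<lambda>s. r s (real i / N))" if "i \<le> N" for i
    using that
  proof (induction i)
    case 0
    then show ?case using r0 by simp
  next
    case (Suc i)
    let ?a = "real i / N" and ?b = "real (Suc i) / N"
    have ab: "0 \<le> ?a" "?a \<le> ?b" "?b \<le> 1" using Suc.prems N by (auto simp: divide_simps)
    have in_square: "s \<in> {0..1} \<and> t \<in> {0..1}" if "s \<in> J" "t \<in> {?a..?b}" for s t
    proof -
      have "?a \<le> t" "t \<le> ?b" using that(2) by auto
      then have "0 \<le> t" "t \<le> 1" using ab by linarith+
      then show ?thesis using that(1) J(2) by auto
    qed
    obtain V \<U> where ev: "evenly_covered E B p V \<U>" and KV: "\<forall>x\<in>J \<times> {?a..?b}. K x \<in> V"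
      using strips[of i] Suc.prems by auto
    show ?case
    proof (rule lift_family_step[OF ev J(1) ab(2), where K = K and r = r])
      show "continuous_map (top_of_set {?a..?b}) E (r s)" if "s \<in> J" for s
      proof (rule continuous_map_from_subtopology_mono)
        show "continuous_map (top_of_set {0..1}) E (r s)"
          using r[of s] that J(2) unfolding pathin_def by auto
      qed (use ab in auto)
      show "continuous_map (top_of_set J) B (\<lambda>s. K (s, ?b))"
        using continuous_map_slices(2)[OF K _ J(2)] ab by auto
      show "\<And>s t. s \<in> J \<Longrightarrow> t \<in> {?a..?b} \<Longrightarrow> p (r s t) = K (s, t)"
        using rK in_square by blast
      show "\<And>s t. s \<in> J \<Longrightarrow> t \<in> {?a..?b} \<Longrightarrow> K (s, t) \<in> V"
        using KV by blast
      show "continuous_map (top_of_set J) E (\<lambda>s. r s ?a)"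
        using Suc.IH Suc.prems by simp
    qed
  qed
  from this[of N] N show ?thesis by simp
qed

text \<open>Lifts of the lines of a homotopy, starting along a continuous path, have continuously
  varying end points: near each s0 the strips of width 1/N are small enough for the Lebesgue
  number of the cover of the square by evenly covered sets.\<close>
lemma lift_family_continuous:
  fixes K :: "real \<times> real \<Rightarrow> 'b" and r :: "real \<Rightarrow> real \<Rightarrow> 'e"
  assumes cov: "covering_map E B p"
    and K: "continuous_map (top_of_set ({0..1} \<times> {0..1})) B K"
    and r: "\<And>s. s \<in> {0..1} \<Longrightarrow> pathin E (r s)"
    and rK: "\<And>s t. s \<in> {0..1} \<Longrightarrow> t \<in> {0..1} \<Longrightarrow> p (r s t) = K (s, t)"
    and r0: "continuous_map (top_of_set {0..1}) E (\<lambda>s. r s 0)"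
  shows "continuous_map (top_of_set {0..1}) E (\<lambda>s. r s 1)"
proof -
  let ?W = "{V. \<exists>\<U>. evenly_covered E B p V \<U>}"
  have KB: "K x \<in> topspace B" if "x \<in> {0..1} \<times> {0..1}" for x
    using continuous_map_image_subset_topspace[OF K] that by auto
  obtain \<delta> where "\<delta> > 0"
    and d: "\<And>T. T \<subseteq> {0..1} \<times> {0..1} \<Longrightarrow> diameter T < \<delta> \<Longrightarrow> \<exists>W\<in>?W. \<forall>x\<in>T. K x \<in> W"
  proof (rule Lebesgue_number_continuous_map[OF _ _ K])
    show "\<exists>W\<in>?W. K x \<in> W" if "x \<in> {0..1} \<times> {0..1}" for x
      using covering_map_evenly_covered[OF cov KB[OF that]] by blast
  qed (auto simp: evenly_covered_def compact_Times)
  then obtain N :: nat where N: "N > 0" "3 / real N < \<delta>"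
    using small_subdivision[of \<delta> 3] by auto
  show ?thesis
  proof (rule continuous_map_local)
    fix s0 assume "s0 \<in> topspace (top_of_set {0..1::real})"
    define J where "J = {0..1} \<inter> {s0 - 1/N <..< s0 + 1/N}"
    have J01: "J \<subseteq> {0..1}" and s0J: "s0 \<in> J" using \<open>s0 \<in> _\<close> N unfolding J_def by auto
    have cJ: "connected_space (top_of_set J)"
      unfolding connected_space_iff_is_interval_1 is_interval_convex_1 J_def by (intro convex_Int) auto
    have "\<exists>V \<U>. evenly_covered E B p V \<U> \<and> (\<forall>x\<in>J \<times> {real i / N..real (Suc i) / N}. K x \<in> V)"
      if "i < N" for i
    proof -
      let ?a = "real i / N" and ?b = "real (Suc i) / N"
      have ab: "0 \<le> ?a" "?b \<le> 1" using that N(1) by (auto simp: divide_simps)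
      have "{?a..?b} \<subseteq> {0..1}" using ab by auto
      then have strip: "J \<times> {?a..?b} \<subseteq> {0..1} \<times> {0..1}" using J01 by blast
      have "diameter (J \<times> {?a..?b}) \<le> 3 * (1 / N)"
        by (rule diameter_strip_le[of _ s0]) (auto simp: J_def diff_divide_distrib[symmetric])
      then have "diameter (J \<times> {?a..?b}) < \<delta>" using N(2) by simp
      then show ?thesis using d[OF strip] by blast
    qed
    then have "continuous_map (top_of_set J) E (\<lambda>s. r s 1)"
      using lift_family_on_strips[OF cJ J01 N(1) K r rK] continuous_map_from_subtopology_mono[OF r0 J01]
      by blast
    moreover have "openin (top_of_set {0..1}) J" unfolding J_def by (auto intro: openin_open_Int)
    ultimately show "\<exists>T. openin (top_of_set {0..1}) T \<and> s0 \<in> T \<and>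
        continuous_map (subtopology (top_of_set {0..1}) T) E (\<lambda>s. r s 1)"
      using s0J J01 by (intro exI[of _ J]) (simp add: subtopology_subtopology Int_absorb1)
  qed
qed

lemma homotopy_lift_loop:
  fixes K :: "real \<times> real \<Rightarrow> 'b"
  assumes cov: "covering_map E B p"
    and K: "continuous_map (top_of_set ({0..1} \<times> {0..1})) B K"
    and a: "pathin E a" "\<And>s. s \<in> {0..1} \<Longrightarrow> p (a s) = K (s, 0)"
    and loop: "\<And>s. s \<in> {0..1} \<Longrightarrow> K (s, 1) = K (s, 0)"
    and const: "\<And>t. t \<in> {0..1} \<Longrightarrow> K (1, t) = K (1, 0)"
    and q: "pathin E q" "q 0 = a 0" "\<And>t. t \<in> {0..1} \<Longrightarrow> p (q t) = K (0, t)"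
  shows "q 1 = q 0"
proof -
  have "\<exists>r. pathin E r \<and> r 0 = a s \<and> (\<forall>t\<in>{0..1}. p (r t) = K (s, t))" if s: "s \<in> {0..1}" for s
  proof (rule covering_path_lift[OF cov, of "\<lambda>t. K (s, t)" "a s"])
    show "pathin B (\<lambda>t. K (s, t))" unfolding pathin_def using continuous_map_slices(1)[OF K s] by simp
  qed (use pathin_in_topspace[OF a(1) s] a(2)[OF s] in auto)
  then obtain r where r: "\<And>s. s \<in> {0..1} \<Longrightarrow> pathin E (r s)" "\<And>s. s \<in> {0..1} \<Longrightarrow> r s 0 = a s"
      "\<And>s t. s \<in> {0..1} \<Longrightarrow> t \<in> {0..1} \<Longrightarrow> p (r s t) = K (s, t)"
    by metis
  have conn: "connected_space (top_of_set {0..1::real})" by simp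
  have paths: "continuous_map (top_of_set {0..1}) E f" if "pathin E f" for f
    using that unfolding pathin_def .
  have "continuous_map (top_of_set {0..1}) E (\<lambda>s. r s 0)"
    by (rule continuous_map_eq[OF paths[OF a(1)]]) (use r(2) in simp)
  then have ends: "continuous_map (top_of_set {0..1}) E (\<lambda>s. r s 1)"
    using lift_family_continuous[OF cov K r(1) r(3)] by blast
  have r1: "continuous_map (top_of_set {0..1}) E (r 1)" and r0: "continuous_map (top_of_set {0..1}) E (r 0)"
    using paths r(1) by auto
  have a1: "continuous_map (top_of_set {0..1}) E (\<lambda>_. a 1)"
    using pathin_in_topspace[OF a(1), of 1] by simp
  \<comment> \<open>The lift of the constant loop K(1,-) is constant.\<close>
  have "r 1 1 = a 1"
  proof (rule covering_lift_unique[OF cov conn r1 a1, where base = 0])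
    show "p (r 1 t) = p (a 1)" if "t \<in> topspace (top_of_set {0..1})" for t
      using r(3)[of 1 t] const[of t] a(2)[of 1] that by simp
  qed (use r(2)[of 1] in auto)
  \<comment> \<open>s \<mapsto> r s 1 and a both lift K(-,1) = K(-,0) and agree at s = 1.\<close>
  have "r 0 1 = a 0"
  proof (rule covering_lift_unique[OF cov conn ends paths[OF a(1)], where base = 1])
    show "p (r s 1) = p (a s)" if "s \<in> topspace (top_of_set {0..1})" for s
      using r(3)[of s 1] loop[of s] a(2)[of s] that by simp
  qed (use \<open>r 1 1 = a 1\<close> in auto)
  \<comment> \<open>q and r 0 both lift K(0,-) starting at a 0.\<close>
  moreover have "q 1 = r 0 1"
  proof (rule covering_lift_unique[OF cov conn paths[OF q(1)] r0, where base = 0])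
    show "p (q t) = p (r 0 t)" if "t \<in> topspace (top_of_set {0..1})" for t
      using q(3)[of t] r(3)[of 0 t] that by simp
  qed (use q(2) r(2) in auto)
  ultimately show ?thesis using q(2) by simp
qed

section \<open>The circle parametrised by [0,1]\<close>

definition ecirc :: "real \<Rightarrow> complex" where
  "ecirc t = exp (\<i> * of_real (2 * pi * t))"

lemma norm_ecirc [simp]: "norm (ecirc t) = 1"
  unfolding ecirc_def by simp

lemma ecirc_sphere: "ecirc t \<in> sphere 0 1"
  by simp

lemma prod_topology_top_of_set: "prod_topology (top_of_set S) (top_of_set T) = top_of_set (S \<times> T)"
  by (simp add: subtopology_Times[symmetric])

lemma topspace_circle: "topspace circle_top = sphere 0 1"
  unfolding circle_top_def by simp

lemma ecirc_frac: "ecirc (frac x) = ecirc x"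
proof -
  have "ecirc x = exp (\<i> * of_real (2 * pi * frac x) + \<i> * (of_int \<lfloor>x\<rfloor> * (of_real pi * 2)))"
    unfolding ecirc_def frac_def by (simp add: algebra_simps)
  then show ?thesis unfolding ecirc_def by (simp only: exp_plus_2pin)
qed

lemma ecirc_1: "ecirc 1 = ecirc 0"
  using ecirc_frac[of 1] by simp

lemma Arg2pi_ecirc: "0 \<le> t \<Longrightarrow> t < 1 \<Longrightarrow> Arg2pi (ecirc t) = 2 * pi * t"
  unfolding ecirc_def by (rule Arg2pi_unique[of 1]) auto

lemma ecirc_onto: "ecirc ` {0..1} = sphere 0 1"
proof
  show "sphere 0 1 \<subseteq> ecirc ` {0..1}"
  proof
    fix z :: complex assume z: "z \<in> sphere 0 1"
    then have "ecirc (Arg2pi z / (2 * pi)) = z" unfolding ecirc_def using Arg2pi_eq[of z] by simp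
    moreover have "Arg2pi z / (2 * pi) \<in> {0..1}" using Arg2pi[of z] by (auto simp: divide_simps)
    ultimately show "z \<in> ecirc ` {0..1}" by (metis image_eqI)
  qed
qed (use ecirc_sphere in auto)

text \<open>A loop g on [0,1] read off on the circle through the inverse of ecirc.\<close>
definition on_circle :: "(real \<Rightarrow> 'a) \<Rightarrow> complex \<Rightarrow> 'a" where
  "on_circle g z = g (Arg2pi z / (2 * pi))"

lemma on_circle_ecirc:
  assumes "g 1 = g 0" "t \<in> {0..1}"
  shows "on_circle g (ecirc t) = g t"
proof (cases "t = 1")
  case True
  then show ?thesis using assms Arg2pi_ecirc[of 0] ecirc_1 unfolding on_circle_def by simp
qed (use assms Arg2pi_ecirc[of t] in \<open>simp add: on_circle_def\<close>)

lemma on_circle_ecirc_frac: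
  assumes "g 1 = g 0"
  shows "on_circle g (ecirc x) = g (frac x)"
  using on_circle_ecirc[OF assms, of "frac x"] frac_lt_1[of x] ecirc_frac[of x] by simp

lemma ecirc_continuous_map: "continuous_map (top_of_set {0..1}) circle_top ecirc"
  unfolding circle_top_def ecirc_def
  by (intro continuous_map_into_subtopology) (auto intro!: continuous_intros simp: continuous_map_iff_continuous)

lemma cylinder_quotient_map:
  "quotient_map (top_of_set ({0..1} \<times> {0..1})) (prod_topology (top_of_set {0..1::real}) circle_top)
     (\<lambda>(s, t). (s, ecirc t))"
proof (rule continuous_imp_quotient_map)
  show "continuous_map (top_of_set ({0..1} \<times> {0..1})) (prod_topology (top_of_set {0..1::real}) circle_top)
     (\<lambda>(s, t). (s, ecirc t))"
    unfolding case_prod_unfold prod_topology_top_of_set[symmetric]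
    by (intro continuous_map_pairedI continuous_map_fst
        continuous_map_compose[OF continuous_map_snd ecirc_continuous_map, unfolded o_def])
  show "compact_space (top_of_set ({0..1::real} \<times> {0..1::real}))"
    by (simp add: compact_space_subtopology compact_Times)
  show "Hausdorff_space (prod_topology (top_of_set {0..1::real}) circle_top)"
    by (simp add: Hausdorff_space_prod_topology circle_top_def Hausdorff_space_subtopology)
  show "(\<lambda>(s, t). (s, ecirc t)) ` topspace (top_of_set ({0..1::real} \<times> {0..1})) =
    topspace (prod_topology (top_of_set {0..1::real}) circle_top)"
    using ecirc_onto by (force simp: topspace_circle image_iff)
qed

lemma continuous_map_through_ecirc:
  "continuous_map (prod_topology (top_of_set {0..1::real}) circle_top) X H \<Longrightarrow>
    continuous_map (top_of_set ({0..1} \<times> {0..1})) X (\<lambda>(s, t). H (s, ecirc t))"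
  using continuous_map_compose[OF quotient_imp_continuous_map[OF cylinder_quotient_map]]
  by (simp add: o_def case_prod_unfold)

lemma continuous_map_on_circle_homotopy:
  assumes h: "continuous_map (top_of_set ({0..1} \<times> {0..1})) X h"
    and loop: "\<And>s. s \<in> {0..1} \<Longrightarrow> h (s, 1) = h (s, 0)"
  shows "continuous_map (prod_topology (top_of_set {0..1::real}) circle_top) X
           (\<lambda>(s, z). on_circle (\<lambda>t. h (s, t)) z)"
proof (rule continuous_compose_quotient_map[OF cylinder_quotient_map])
  show "continuous_map (top_of_set ({0..1} \<times> {0..1})) X
          ((\<lambda>(s, z). on_circle (\<lambda>t. h (s, t)) z) \<circ> (\<lambda>(s, t). (s, ecirc t)))"
  proof (rule continuous_map_eq[OF h])
    fix x assume "x \<in> topspace (top_of_set ({0..1::real} \<times> {0..1::real}))"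
    then obtain s t where "x = (s, t)" "s \<in> {0..1}" "t \<in> {0..1}" by auto
    then show "h x = ((\<lambda>(s, z). on_circle (\<lambda>t. h (s, t)) z) \<circ> (\<lambda>(s, t). (s, ecirc t))) x"
      using on_circle_ecirc[of "\<lambda>t. h (s, t)" t] loop[of s] by simp
  qed
qed

lemma continuous_map_on_circle:
  assumes g: "continuous_map (top_of_set {0..1}) X g" and loop: "g 1 = g 0"
  shows "continuous_map circle_top X (on_circle g)"
proof (rule continuous_compose_quotient_map)
  show "quotient_map (top_of_set {0..1}) circle_top ecirc"
    by (rule continuous_imp_quotient_map[OF ecirc_continuous_map])
       (auto simp: compact_space_subtopology circle_top_def ecirc_onto Hausdorff_space_subtopology)
  show "continuous_map (top_of_set {0..1}) X (on_circle g \<circ> ecirc)"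
    by (rule continuous_map_eq[OF g]) (use on_circle_ecirc[OF loop] in simp)
qed

lemma ecirc_arc_related:
  assumes "t \<le> t'" "ecirc ` {t..t'} \<subseteq> W"
  shows "(ecirc t, ecirc t') \<in> circle_circ W"
  unfolding circle_circ_def
proof (intro CollectI case_prodI exI conjI)
  show "2 * pi * t \<le> 2 * pi * t'" using assms(1) by simp
  show "(\<lambda>t. exp (\<i> * complex_of_real t)) ` {2 * pi * t..2 * pi * t'} \<subseteq> W"
  proof
    fix z assume "z \<in> (\<lambda>t. exp (\<i> * complex_of_real t)) ` {2 * pi * t..2 * pi * t'}"
    then obtain y where y: "y \<in> {2 * pi * t..2 * pi * t'}" "z = exp (\<i> * complex_of_real y)" by blast
    then have "z = ecirc (y / (2 * pi))" "y / (2 * pi) \<in> {t..t'}"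
      unfolding ecirc_def by (auto simp: field_simps)
    then show "z \<in> W" using assms(2) by blast
  qed
qed (simp_all add: ecirc_def)

section \<open>Circulations\<close>

lemma circulation_preorder:
  assumes "is_circulation X C" "openin X V"
  shows "C V \<subseteq> V \<times> V" "refl_on V (C V)" "trans (C V)"
  using assms unfolding is_circulation_def by blast+

lemma circulation_trans:
  "is_circulation X C \<Longrightarrow> openin X V \<Longrightarrow> (x, y) \<in> C V \<Longrightarrow> (y, z) \<in> C V \<Longrightarrow> (x, z) \<in> C V"
  using circulation_preorder(3) unfolding trans_def by metis

lemma circulation_Union:
  assumes "is_circulation X C" "\<And>V. V \<in> \<O> \<Longrightarrow> openin X V"
  shows "C (\<Union>\<O>) = Id_on (\<Union>\<O>) \<union> (\<Union>V\<in>\<O>. C V)\<^sup>+"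
  using assms unfolding is_circulation_def smallest_preorder_on_def by blast

lemma circulation_mono:
  assumes c: "is_circulation X C" and o: "openin X U" "openin X V" and "U \<subseteq> V"
  shows "C U \<subseteq> C V"
proof -
  have "C (\<Union>{U, V}) = Id_on (\<Union>{U, V}) \<union> (\<Union>W\<in>{U, V}. C W)\<^sup>+"
    by (rule circulation_Union[OF c]) (use o in auto)
  moreover have "\<Union>{U, V} = V" using \<open>U \<subseteq> V\<close> by auto
  ultimately have "C V = Id_on V \<union> (C U \<union> C V)\<^sup>+" by simp
  then show ?thesis by auto
qed

section \<open>Sheets of a stream covering\<close>

definition stream_sheet ::
  "'e topology \<Rightarrow> ('e set \<Rightarrow> ('e \<times> 'e) set) \<Rightarrow> 'b topology \<Rightarrow> ('b set \<Rightarrow> ('b \<times> 'b) set)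
   \<Rightarrow> ('e \<Rightarrow> 'b) \<Rightarrow> 'e set \<Rightarrow> 'b set \<Rightarrow> bool" where
  "stream_sheet E CE B CB \<rho> U V \<longleftrightarrow> openin E U \<and> openin B V \<and> U \<subseteq> topspace E \<inter> \<rho> -` V \<and>
     stream_iso (subtopology E U) CE (subtopology B V) CB \<rho>"

lemma stream_covering_sheets_cover:
  assumes "stream_covering E CE B CB \<rho>" "x \<in> topspace E"
  obtains U V where "stream_sheet E CE B CB \<rho> U V" "x \<in> U"
proof -
  have "\<rho> x \<in> topspace B" using assms unfolding stream_covering_def stream_map_def
    by (auto dest: continuous_map_image_subset_topspace)
  then obtain V \<U> where V: "\<rho> x \<in> V" "openin B V" "\<Union>\<U> = topspace E \<inter> \<rho> -` V"
    "\<forall>U\<in>\<U>. openin E U \<and> stream_iso (subtopology E U) CE (subtopology B V) CB \<rho>"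
    using assms(1) unfolding stream_covering_def by metis
  then obtain U where "U \<in> \<U>" "x \<in> U" using assms(2) by blast
  then show ?thesis using that[of U V] V unfolding stream_sheet_def by blast
qed

lemma stream_sheet_section:
  assumes s: "stream_sheet E CE B CB \<rho> U V"
  obtains g where "\<And>x. x \<in> U \<Longrightarrow> g (\<rho> x) = x" "\<And>y. y \<in> V \<Longrightarrow> \<rho> (g y) = y"
    "continuous_map (subtopology B V) E g"
    "\<And>y y'. (y, y') \<in> CB V \<Longrightarrow> (g y, g y') \<in> CE U"
    "\<And>x x'. (x, x') \<in> CE U \<Longrightarrow> (\<rho> x, \<rho> x') \<in> CB V"
proof -
  have oU: "openin E U" and oV: "openin B V" and UV: "U \<subseteq> topspace E \<inter> \<rho> -` V"
    and iso: "stream_iso (subtopology E U) CE (subtopology B V) CB \<rho>" using s unfolding stream_sheet_def by auto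
  have tU: "topspace (subtopology E U) = U" and tV: "topspace (subtopology B V) = V"
    using oU oV by (metis openin_subset topspace_subtopology_subset)+
  obtain g where r: "stream_map (subtopology E U) CE (subtopology B V) CB \<rho>"
    and g: "stream_map (subtopology B V) CB (subtopology E U) CE g"
    and gr: "\<forall>x\<in>U. g (\<rho> x) = x" and rg: "\<forall>y\<in>V. \<rho> (g y) = y"
    using iso tU tV unfolding stream_iso_def by metis
  have gc: "continuous_map (subtopology B V) (subtopology E U) g" using g unfolding stream_map_def by blast
  have gU: "topspace (subtopology B V) \<inter> g -` U = V"
    using continuous_map_image_subset_topspace[OF gc] tU tV by auto
  have rV: "topspace (subtopology E U) \<inter> \<rho> -` V = U" using tU UV by auto
  have oUU: "openin (subtopology E U) U" and oVV: "openin (subtopology B V) V"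
    using oU oV by (simp_all add: openin_subset openin_subtopology_refl)
  show ?thesis
  proof (rule that)
    show "continuous_map (subtopology B V) E g" using gc continuous_map_in_subtopology by blast
    have "(g y, g y') \<in> CE U" if "(y, y') \<in> CB (topspace (subtopology B V) \<inter> g -` U)" for y y'
      using g oUU that unfolding stream_map_def by blast
    then show "(g y, g y') \<in> CE U" if "(y, y') \<in> CB V" for y y'
      using that unfolding gU by blast
    have "(\<rho> x, \<rho> x') \<in> CB V" if "(x, x') \<in> CE (topspace (subtopology E U) \<inter> \<rho> -` V)" for x x'
      using r oVV that unfolding stream_map_def by blast
    then show "(\<rho> x, \<rho> x') \<in> CB V" if "(x, x') \<in> CE U" for x x'
      using that unfolding rV by blast
  qed (use gr rg in auto)
qed

lemma stream_covering_circulation: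
  assumes sE: "is_stream E CE" and sc: "stream_covering E CE B CB \<rho>"
  shows "CE (topspace E) = Id_on (topspace E) \<union> (\<Union>U\<in>{U. \<exists>V. stream_sheet E CE B CB \<rho> U V}. CE U)\<^sup>+"
proof -
  let ?S = "{U. \<exists>V. stream_sheet E CE B CB \<rho> U V}"
  have "\<Union>?S = topspace E"
  proof
    show "\<Union>?S \<subseteq> topspace E" by (auto simp: stream_sheet_def)
    show "topspace E \<subseteq> \<Union>?S" using stream_covering_sheets_cover[OF sc] by blast
  qed
  moreover have "CE (\<Union>?S) = Id_on (\<Union>?S) \<union> (\<Union>U\<in>?S. CE U)\<^sup>+"
    by (rule circulation_Union[OF sE]) (auto simp: stream_sheet_def)
  ultimately show ?thesis by simp
qed

section \<open>Directed paths\<close>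

text \<open>The order-theoretic half of being a dipath, for maps of [0,1] that need not be continuous.\<close>
definition dimonotone :: "'b topology \<Rightarrow> ('b set \<Rightarrow> ('b \<times> 'b) set) \<Rightarrow> (real \<Rightarrow> 'b) \<Rightarrow> bool" where
  "dimonotone B CB \<gamma> \<longleftrightarrow> (\<forall>W t t'. openin B W \<longrightarrow> 0 \<le> t \<longrightarrow> t \<le> t' \<longrightarrow> t' \<le> 1 \<longrightarrow>
      \<gamma> ` {t..t'} \<subseteq> W \<longrightarrow> (\<gamma> t, \<gamma> t') \<in> CB W)"

lemma dimonotoneD:
  "dimonotone B CB \<gamma> \<Longrightarrow> openin B W \<Longrightarrow> 0 \<le> t \<Longrightarrow> t \<le> t' \<Longrightarrow> t' \<le> 1 \<Longrightarrow> \<gamma> ` {t..t'} \<subseteq> W \<Longrightarrow>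
    (\<gamma> t, \<gamma> t') \<in> CB W"
  unfolding dimonotone_def by blast

lemma dimonotone_cong:
  assumes eq: "\<And>t. t \<in> {0..1} \<Longrightarrow> \<gamma> t = \<gamma>' t" and d: "dimonotone B CB \<gamma>"
  shows "dimonotone B CB \<gamma>'"
  unfolding dimonotone_def
proof (intro allI impI)
  fix W t t' assume W: "openin B W" and t: "0 \<le> t" "t \<le> t'" "t' \<le> 1" and img: "\<gamma>' ` {t..t'} \<subseteq> W"
  have "\<gamma> ` {t..t'} = \<gamma>' ` {t..t'}" using eq t by (intro image_cong) auto
  then have "(\<gamma> t, \<gamma> t') \<in> CB W" using dimonotoneD[OF d W t] img by simp
  then show "(\<gamma>' t, \<gamma>' t') \<in> CB W" using eq t by simp
qed

lemma dipath_dimonotone: "dipath B CB \<gamma> \<Longrightarrow> dimonotone B CB \<gamma>"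
  unfolding dipath_def stream_map_def dimonotone_def dint_circ_def dint_top_def by fastforce

lemma stream_map_circle_dimonotone:
  assumes "stream_map circle_top circle_circ B CB f"
  shows "dimonotone B CB (f \<circ> ecirc)"
  unfolding dimonotone_def
proof (intro allI impI)
  fix W t t' assume W: "openin B W" and "t \<le> t'" "(f \<circ> ecirc) ` {t..t'} \<subseteq> W"
  then have "(ecirc t, ecirc t') \<in> circle_circ (topspace circle_top \<inter> f -` W)"
    by (intro ecirc_arc_related) (auto simp: topspace_circle)
  then show "((f \<circ> ecirc) t, (f \<circ> ecirc) t') \<in> CB W" using assms W unfolding stream_map_def by simp
qed

lemma trans_from_close_pairs:
  fixes q :: "real \<Rightarrow> 'a"
  assumes R: "trans R" and "\<delta> > 0"
    and close: "\<And>t t'. 0 \<le> t \<Longrightarrow> t \<le> t' \<Longrightarrow> t' \<le> 1 \<Longrightarrow> t' - t < \<delta> \<Longrightarrow> (q t, q t') \<in> R"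
    and t: "0 \<le> t" "t \<le> t'" "t' \<le> 1"
  shows "(q t, q t') \<in> R"
proof -
  have "(q t, q t') \<in> R" if "0 \<le> t" "t \<le> t'" "t' \<le> 1" "t' - t \<le> real n * (\<delta> / 2)" for n t t'
    using that
  proof (induction n arbitrary: t')
    case 0
    then show ?case using close[of t t'] \<open>\<delta> > 0\<close> by simp
  next
    case (Suc n)
    define m where "m = max t (t' - \<delta> / 2)"
    have "t \<le> m" "m \<le> t'" "m - t \<le> real n * (\<delta> / 2)" "t' - m < \<delta>"
      using Suc.prems \<open>\<delta> > 0\<close> unfolding m_def by (auto simp: algebra_simps max_def)
    then have "(q t, q m) \<in> R" "(q m, q t') \<in> R"
      using Suc.IH[of m] close[of m t'] Suc.prems by auto
    then show ?case using R unfolding trans_def by blast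
  qed
  moreover obtain n :: nat where "2 / \<delta> < real n" using reals_Archimedean2 by blast
  then have "t' - t \<le> real n * (\<delta> / 2)" using t \<open>\<delta> > 0\<close> by (simp add: field_simps)
  ultimately show ?thesis using t by blast
qed

text \<open>A path in E whose image in B is dimonotone is increasing for the circulation of E:
  locally it lies in a sheet, where the circulation is transported from B.\<close>
lemma lift_dimonotone_increasing:
  assumes sE: "is_stream E CE" and sc: "stream_covering E CE B CB \<rho>"
    and q: "pathin E q" and d: "dimonotone B CB (\<rho> \<circ> q)"
    and t: "0 \<le> t" "t \<le> t'" "t' \<le> 1"
  shows "(q t, q t') \<in> CE (topspace E)"
proof -
  let ?S = "{U. \<exists>V. stream_sheet E CE B CB \<rho> U V}"
  have cq: "continuous_map (top_of_set {0..1}) E q" using q unfolding pathin_def .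
  obtain \<delta> where "\<delta> > 0" and small: "\<And>T. T \<subseteq> {0..1} \<Longrightarrow> diameter T < \<delta> \<Longrightarrow> \<exists>U\<in>?S. \<forall>x\<in>T. q x \<in> U"
  proof (rule Lebesgue_number_continuous_map[OF _ _ cq])
    show "\<exists>U\<in>?S. q x \<in> U" if "x \<in> {0..1}" for x
      using stream_covering_sheets_cover[OF sc pathin_in_topspace[OF q that]] by blast
  qed (auto simp: stream_sheet_def)
  have "(q t, q t') \<in> CE (topspace E)" if "0 \<le> t" "t \<le> t'" "t' \<le> 1" "t' - t < \<delta>" for t t'
  proof -
    have "{t..t'} \<subseteq> {0..1}" "diameter {t..t'} < \<delta>" using that by auto
    then obtain U where "U \<in> ?S" and "\<forall>x\<in>{t..t'}. q x \<in> U" using small by blast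
    then obtain V where sh: "stream_sheet E CE B CB \<rho> U V" and qU: "q ` {t..t'} \<subseteq> U" by blast
    obtain g where g: "\<And>x. x \<in> U \<Longrightarrow> g (\<rho> x) = x" "\<And>y y'. (y, y') \<in> CB V \<Longrightarrow> (g y, g y') \<in> CE U"
      using stream_sheet_section[OF sh] by metis
    have oU: "openin E U" and "openin B V" and "U \<subseteq> topspace E \<inter> \<rho> -` V"
      using sh unfolding stream_sheet_def by auto
    moreover have "(\<rho> \<circ> q) ` {t..t'} \<subseteq> V" using qU \<open>U \<subseteq> _\<close> by auto
    ultimately have "(\<rho> (q t), \<rho> (q t')) \<in> CB V" using dimonotoneD[OF d] that by simp
    then have "(g (\<rho> (q t)), g (\<rho> (q t'))) \<in> CE U" by (rule g(2))
    moreover have "q t \<in> U" "q t' \<in> U" using qU that by auto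
    ultimately have "(q t, q t') \<in> CE U" using g(1) by simp
    then show ?thesis using circulation_mono[OF sE oU] \<open>U \<subseteq> _\<close> by blast
  qed
  then show ?thesis
    using trans_from_close_pairs[OF _ \<open>\<delta> > 0\<close> _ t] circulation_preorder(3)[OF sE] by blast
qed

section \<open>Antisymmetry forces null-homotopic directed loops to be constant\<close>

text \<open>Lift the loop f \<circ> ecirc to E. The null-homotopy of f makes the lift closed, and since f
  is a stream map the lift is increasing, so antisymmetry of the circulation of E makes it
  constant.\<close>
lemma antisym_imp_directed_loops_constant:
  assumes sE: "is_stream E CE" and usc: "universal_stream_covering E CE B CB \<rho>"
    and anti: "antisym (CE (topspace E))"
    and f: "stream_map circle_top circle_circ B CB f" and nh: "null_homotopic circle_top B f"
  shows "\<exists>c. \<forall>z\<in>topspace circle_top. f z = c"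
proof -
  have cov: "covering_map E B \<rho>" and sc: "stream_covering E CE B CB \<rho>"
    using usc unfolding universal_stream_covering_def universal_covering_map_def by auto
  obtain c H where H: "continuous_map (prod_topology (top_of_set {0..1::real}) circle_top) B H"
    and H0: "\<And>z. H (0, z) = f z" and H1: "\<And>z. H (1, z) = c"
    using nh unfolding null_homotopic_def homotopic_with_def by metis
  define K where "K = (\<lambda>(s, t). H (s, ecirc t))"
  have K: "continuous_map (top_of_set ({0..1} \<times> {0..1})) B K"
    unfolding K_def by (rule continuous_map_through_ecirc[OF H])
  have bottom: "pathin B (\<lambda>s. K (s, 0))" and left: "pathin B (\<lambda>t. K (0, t))"
    unfolding pathin_def using continuous_map_slices[OF K] by auto
  have "K (0, 0) \<in> \<rho> ` topspace E"
    using cov pathin_in_topspace[OF bottom, of 0] unfolding covering_map_def by simp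
  then obtain e0 where e0: "e0 \<in> topspace E" "\<rho> e0 = K (0, 0)" by (metis imageE)
  obtain a where a: "pathin E a" "a 0 = e0" "\<And>s. s \<in> {0..1} \<Longrightarrow> \<rho> (a s) = K (s, 0)"
    using covering_path_lift[OF cov bottom e0(1)] e0(2) by blast
  have "a 0 \<in> topspace E" "\<rho> (a 0) = K (0, 0)" using pathin_in_topspace[OF a(1)] a(2) e0 by auto
  then obtain q where q: "pathin E q" "q 0 = a 0" "\<And>t. t \<in> {0..1} \<Longrightarrow> \<rho> (q t) = K (0, t)"
    using covering_path_lift[OF cov left] by blast
  have closed: "q 1 = q 0"
    by (rule homotopy_lift_loop[OF cov K a(1,3) _ _ q]) (auto simp: K_def H1 ecirc_1)
  have qf: "\<rho> (q t) = f (ecirc t)" if "t \<in> {0..1}" for t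
    using q(3)[OF that] by (simp add: K_def H0)
  have "dimonotone B CB (\<rho> \<circ> q)"
    using dimonotone_cong[OF _ stream_map_circle_dimonotone[OF f]] qf by simp
  then have increasing: "(q t, q t') \<in> CE (topspace E)" if "0 \<le> t" "t \<le> t'" "t' \<le> 1" for t t'
    using lift_dimonotone_increasing[OF sE sc q(1)] that by blast
  have "q t = q 0" if "t \<in> {0..1}" for t
    using increasing[of 0 t] increasing[of t 1] closed that anti unfolding antisym_def by auto
  then have on_lift: "f (ecirc t) = \<rho> (q 0)" if "t \<in> {0..1}" for t
    using qf that by metis
  show ?thesis
  proof (intro exI ballI)
    fix z assume "z \<in> topspace circle_top"
    then obtain t where "t \<in> {0..1}" "z = ecirc t" using ecirc_onto topspace_circle by (metis imageE)
    then show "f z = \<rho> (q 0)" using on_lift by simp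
  qed
qed

definition path_join :: "(real \<Rightarrow> 'a) \<Rightarrow> (real \<Rightarrow> 'a) \<Rightarrow> real \<Rightarrow> 'a" where
  "path_join p q t = (if t \<le> 1/2 then p (2 * t) else q (2 * t - 1))"

lemma path_join_ends:
  "path_join p q 0 = p 0" "path_join p q 1 = q 1" "path_join p q (1/2) = p 1"
  unfolding path_join_def by simp_all

lemma path_join_upper:
  assumes "q 0 = p 1" "1/2 \<le> t"
  shows "path_join p q t = q (2 * t - 1)"
proof (cases "t = 1/2")
  case True
  then have "2 * t = 1" by simp
  then show ?thesis using assms(1) by (simp add: path_join_def)
qed (use assms(2) in \<open>simp add: path_join_def\<close>)

lemma comp_path_join: "f \<circ> path_join p q = path_join (f \<circ> p) (f \<circ> q)"
  unfolding path_join_def by auto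

lemma pathin_path_join:
  assumes p: "pathin E p" and q: "pathin E q" and pq: "q 0 = p 1"
  shows "pathin E (path_join p q)"
proof -
  have "continuous_map (top_of_set {0..1/2}) (top_of_set {0..1::real}) (\<lambda>t. 2 * t)"
    "continuous_map (top_of_set {1/2..1}) (top_of_set {0..1::real}) (\<lambda>t. 2 * t - 1)"
    by (auto intro!: continuous_map_into_subtopology continuous_intros simp: continuous_map_iff_continuous)
  then have "continuous_map (top_of_set {0..1/2}) E (\<lambda>t. p (2 * t))"
    and "continuous_map (top_of_set {1/2..1}) E (\<lambda>t. q (2 * t - 1))"
    using continuous_map_compose p q unfolding pathin_def o_def by blast+
  from continuous_map_glue_intervals[of 0 "1/2" 1, OF _ _ this] pq show ?thesis
    unfolding pathin_def path_join_def by simp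
qed

lemma dimonotone_affine_piece:
  fixes k d a b :: real
  assumes \<gamma>: "dimonotone B CB \<gamma>" and W: "openin B W" and k: "0 < k"
    and ab: "0 \<le> k * a + d" "a \<le> b" "k * b + d \<le> 1"
    and \<gamma>': "\<And>x. x \<in> {a..b} \<Longrightarrow> \<gamma>' x = \<gamma> (k * x + d)" and img: "\<gamma>' ` {a..b} \<subseteq> W"
  shows "(\<gamma>' a, \<gamma>' b) \<in> CB W"
proof -
  have "\<gamma> y \<in> W" if "y \<in> {k * a + d..k * b + d}" for y
  proof -
    have x: "(y - d) / k \<in> {a..b}" using that k by (auto simp: field_simps)
    then have "\<gamma>' ((y - d) / k) \<in> W" using img by blast
    moreover have "\<gamma>' ((y - d) / k) = \<gamma> y" using \<gamma>'[OF x] k by simp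
    ultimately show ?thesis by simp
  qed
  then have "\<gamma> ` {k * a + d..k * b + d} \<subseteq> W" by blast
  moreover have "k * a + d \<le> k * b + d" using ab(2) k by simp
  ultimately have "(\<gamma> (k * a + d), \<gamma> (k * b + d)) \<in> CB W"
    using dimonotoneD[OF \<gamma> W ab(1) _ ab(3)] by blast
  then show ?thesis using \<gamma>' ab(2) by simp
qed

lemma dimonotone_path_join:
  assumes sB: "is_stream B CB" and \<gamma>: "dimonotone B CB \<gamma>" and \<eta>: "dimonotone B CB \<eta>"
    and joint: "\<eta> 0 = \<gamma> 1"
  shows "dimonotone B CB (path_join \<gamma> \<eta>)"
  unfolding dimonotone_def
proof (intro allI impI)
  fix W t t' assume W: "openin B W" and t: "0 \<le> t" "t \<le> t'" "t' \<le> 1"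
    and img: "path_join \<gamma> \<eta> ` {t..t'} \<subseteq> W"
  have lower: "(path_join \<gamma> \<eta> t, path_join \<gamma> \<eta> u) \<in> CB W" if "t \<le> u" "u \<le> 1/2" "u \<le> t'" for u
  proof -
    have piece: "path_join \<gamma> \<eta> ` {t..u} \<subseteq> W" using img that(3) by auto
    show ?thesis
      by (rule dimonotone_affine_piece[OF \<gamma> W _ _ _ _ _ piece, where k = 2 and d = 0])
         (use t that in \<open>auto simp: path_join_def\<close>)
  qed
  have upper: "(path_join \<gamma> \<eta> u, path_join \<gamma> \<eta> t') \<in> CB W" if "1/2 \<le> u" "t \<le> u" "u \<le> t'" for u
  proof -
    have piece: "path_join \<gamma> \<eta> ` {u..t'} \<subseteq> W" using img that(2) by auto
    show ?thesis
      by (rule dimonotone_affine_piece[OF \<eta> W _ _ _ _ _ piece, where k = 2 and d = "-1"])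
         (use t that path_join_upper[where p = \<gamma> and q = \<eta>, OF joint] in auto)
  qed
  show "(path_join \<gamma> \<eta> t, path_join \<gamma> \<eta> t') \<in> CB W"
  proof (cases "t' \<le> 1/2")
    case True
    then show ?thesis using lower[of t'] t by simp
  next
    case False
    show ?thesis
    proof (cases "1/2 \<le> t")
      case True
      then show ?thesis using upper[of t] t by simp
    next
      case False
      then show ?thesis
        using lower[of "1/2"] upper[of "1/2"] \<open>\<not> t' \<le> 1/2\<close> circulation_trans[OF sB W] by force
    qed
  qed
qed

section \<open>Antisymmetry from constancy of null-homotopic directed loops\<close>

lemma sheet_related_path:
  assumes sE: "is_stream E CE" and po: "path_ordered B CB"
    and sh: "stream_sheet E CE B CB \<rho> U V" and xy: "(x, y) \<in> CE U"
  obtains L where "pathin E L" "L 0 = x" "L 1 = y" "dimonotone B CB (\<rho> \<circ> L)"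
proof -
  obtain g where g: "\<And>x. x \<in> U \<Longrightarrow> g (\<rho> x) = x" "\<And>y. y \<in> V \<Longrightarrow> \<rho> (g y) = y"
      "continuous_map (subtopology B V) E g" "\<And>x x'. (x, x') \<in> CE U \<Longrightarrow> (\<rho> x, \<rho> x') \<in> CB V"
    using stream_sheet_section[OF sh] by metis
  have "openin E U" "openin B V" using sh unfolding stream_sheet_def by auto
  then have xyU: "x \<in> U" "y \<in> U" using circulation_preorder(1)[OF sE] xy by auto
  obtain \<gamma> where \<gamma>: "dipath B CB \<gamma>" "\<gamma> 0 = \<rho> x" "\<gamma> 1 = \<rho> y" "\<gamma> ` {0..1} \<subseteq> V"
    using po g(4)[OF xy] \<open>openin B V\<close> unfolding path_ordered_def by blast
  have "continuous_map (top_of_set {0..1}) (subtopology B V) \<gamma>"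
    using \<gamma>(1,4) unfolding dipath_def stream_map_def dint_top_def
    by (simp add: continuous_map_in_subtopology image_subset_iff_funcset)
  then have "pathin E (g \<circ> \<gamma>)" unfolding pathin_def using continuous_map_compose g(3) by blast
  moreover have "dimonotone B CB (\<rho> \<circ> (g \<circ> \<gamma>))"
    by (rule dimonotone_cong[OF _ dipath_dimonotone[OF \<gamma>(1)]]) (use g(2) \<gamma>(4) in \<open>auto simp: image_subset_iff\<close>)
  ultimately show ?thesis using that \<gamma> g(1) xyU by auto
qed

lemma sheet_chain_path:
  assumes sE: "is_stream E CE" and sB: "is_stream B CB" and po: "path_ordered B CB"
    and uv: "(u, v) \<in> (\<Union>U\<in>{U. \<exists>V. stream_sheet E CE B CB \<rho> U V}. CE U)\<^sup>+"
  shows "\<exists>L. pathin E L \<and> L 0 = u \<and> L 1 = v \<and> dimonotone B CB (\<rho> \<circ> L)"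
  using uv
proof (induction rule: trancl_induct)
  case (base y)
  then show ?case using sheet_related_path[OF sE po] by blast
next
  case (step y z)
  obtain L1 where L1: "pathin E L1" "L1 0 = u" "L1 1 = y" "dimonotone B CB (\<rho> \<circ> L1)"
    using step.IH by blast
  obtain L2 where L2: "pathin E L2" "L2 0 = y" "L2 1 = z" "dimonotone B CB (\<rho> \<circ> L2)"
    using sheet_related_path[OF sE po] step.hyps(2) by blast
  show ?case
    using pathin_path_join[OF L1(1) L2(1)] dimonotone_path_join[OF sB L1(4) L2(4)] L1 L2
    by (intro exI[of _ "path_join L1 L2"]) (simp add: path_join_ends comp_path_join)
qed

lemma dimonotone_frac_same_period:
  assumes W: "openin B W" and \<gamma>: "dimonotone B CB \<gamma>"
    and u: "u \<le> u'" "\<lfloor>u'\<rfloor> = \<lfloor>u\<rfloor>" and img: "\<forall>x\<in>{u..u'}. \<gamma> (frac x) \<in> W"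
  shows "(\<gamma> (frac u), \<gamma> (frac u')) \<in> CB W"
proof (rule dimonotoneD[OF \<gamma> W])
  show "0 \<le> frac u" "frac u \<le> frac u'" "frac u' \<le> 1"
    using u frac_lt_1[of u'] unfolding frac_def by auto
  have "\<gamma> y \<in> W" if y: "y \<in> {frac u..frac u'}" for y
  proof -
    have "0 \<le> y" "y < 1" using y order_trans[OF frac_ge_0[of u]] frac_lt_1[of u'] by auto
    then have "frac (y + of_int \<lfloor>u\<rfloor>) = y" by (simp add: frac_unique_iff)
    moreover have "y + of_int \<lfloor>u\<rfloor> \<in> {u..u'}" using y u unfolding frac_def by auto
    ultimately show ?thesis using img by metis
  qed
  then show "\<gamma> ` {frac u..frac u'} \<subseteq> W" by blast
qed

text \<open>Running around a closed dimonotone path repeatedly stays directed: induction on the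
  number of periods crossed, gluing at the integers where \<gamma> 1 = \<gamma> 0.\<close>
lemma dimonotone_periodic:
  assumes sB: "is_stream B CB" and W: "openin B W" and \<gamma>: "dimonotone B CB \<gamma>"
    and closed: "\<gamma> 1 = \<gamma> 0"
    and u: "u \<le> u'" and img: "\<And>x. x \<in> {u..u'} \<Longrightarrow> \<gamma> (frac x) \<in> W"
  shows "(\<gamma> (frac u), \<gamma> (frac u')) \<in> CB W"
proof -
  have "(\<gamma> (frac u), \<gamma> (frac u')) \<in> CB W"
    if "u \<le> u'" "nat (\<lfloor>u'\<rfloor> - \<lfloor>u\<rfloor>) = n" "\<forall>x\<in>{u..u'}. \<gamma> (frac x) \<in> W" for n u
    using that
  proof (induction n arbitrary: u)
    case 0
    then have "\<lfloor>u'\<rfloor> = \<lfloor>u\<rfloor>" using floor_mono[of u u'] by linarith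
    then show ?case using dimonotone_frac_same_period[OF W \<gamma>] 0 by blast
  next
    case (Suc n)
    define m where "m = real_of_int (\<lfloor>u\<rfloor> + 1)"
    have fm: "\<lfloor>m\<rfloor> = \<lfloor>u\<rfloor> + 1" "frac m = 0" unfolding m_def by simp_all
    have mu: "u \<le> m" "m \<le> u'" unfolding m_def
      using Suc.prems(2) real_of_int_floor_add_one_ge[of u] of_int_floor_le[of u'] by linarith+
    then have to_end: "(\<gamma> (frac m), \<gamma> (frac u')) \<in> CB W"
      using Suc fm by (intro Suc.IH) auto
    have "\<gamma> y \<in> W" if y: "y \<in> {frac u..1}" for y
    proof (cases "y = 1")
      case True
      have "\<gamma> (frac m) \<in> W" using Suc.prems(3) mu by auto
      then show ?thesis using True fm closed by simp
    next
      case False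
      then have "0 \<le> y" "y < 1" using y order_trans[OF frac_ge_0[of u]] by auto
      then have "frac (y + of_int \<lfloor>u\<rfloor>) = y" by (simp add: frac_unique_iff)
      moreover have "y + of_int \<lfloor>u\<rfloor> \<in> {u..u'}" using y \<open>y < 1\<close> mu unfolding frac_def m_def by auto
      ultimately show ?thesis using Suc.prems(3) by metis
    qed
    then have "(\<gamma> (frac u), \<gamma> 1) \<in> CB W"
      using frac_lt_1[of u] by (intro dimonotoneD[OF \<gamma> W]) auto
    then show ?case using to_end fm closed circulation_trans[OF sB W] by metis
  qed
  then show ?thesis using u img by blast
qed

lemma stream_map_on_circle:
  assumes sB: "is_stream B CB" and \<gamma>: "continuous_map (top_of_set {0..1}) B \<gamma>"
    and d: "dimonotone B CB \<gamma>" and closed: "\<gamma> 1 = \<gamma> 0"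
  shows "stream_map circle_top circle_circ B CB (on_circle \<gamma>)"
  unfolding stream_map_def
proof (intro conjI allI impI continuous_map_on_circle[OF \<gamma> closed])
  fix V z z' assume V: "openin B V" and "(z, z') \<in> circle_circ (topspace circle_top \<inter> on_circle \<gamma> -` V)"
  then obtain \<theta> \<theta>' where th: "\<theta> \<le> \<theta>'" "z = exp (\<i> * of_real \<theta>)" "z' = exp (\<i> * of_real \<theta>')"
    and arc: "(\<lambda>t. exp (\<i> * of_real t)) ` {\<theta>..\<theta>'} \<subseteq> topspace circle_top \<inter> on_circle \<gamma> -` V"
    unfolding circle_circ_def by blast
  define u u' where "u = \<theta> / (2 * pi)" and "u' = \<theta>' / (2 * pi)"
  have zu: "z = ecirc u" "z' = ecirc u'" unfolding ecirc_def u_def u'_def th by simp_all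
  have "\<gamma> (frac x) \<in> V" if "x \<in> {u..u'}" for x
  proof -
    have "2 * pi * x \<in> {\<theta>..\<theta>'}" using that unfolding u_def u'_def by (auto simp: field_simps)
    then have "on_circle \<gamma> (ecirc x) \<in> V" using arc unfolding ecirc_def by blast
    then show ?thesis using on_circle_ecirc_frac[OF closed] by simp
  qed
  moreover have "u \<le> u'" using th(1) unfolding u_def u'_def by (simp add: divide_right_mono)
  ultimately show "(on_circle \<gamma> z, on_circle \<gamma> z') \<in> CB V"
    using dimonotone_periodic[OF sB V d closed] zu on_circle_ecirc_frac[OF closed] by simp
qed

lemma null_homotopic_on_circle:
  assumes sc: "simply_connected_space E" and \<rho>: "continuous_map E B \<rho>"
    and L: "pathin E L" "L 1 = L 0"
  shows "null_homotopic circle_top B (on_circle (\<rho> \<circ> L))"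
proof -
  obtain h where h: "continuous_map (prod_topology (top_of_set {0..1::real}) (top_of_set {0..1})) E h"
    and h0: "\<And>t. h (0, t) = L t" and h1: "\<And>t. h (1, t) = L 0"
    and loops: "\<And>s. s \<in> {0..1} \<Longrightarrow> h (s, 1) = h (s, 0)"
    using sc L unfolding simply_connected_space_def homotopic_with_def by auto
  have "continuous_map (top_of_set ({0..1} \<times> {0..1})) B (\<rho> \<circ> h)"
    using continuous_map_compose[OF h \<rho>] by (simp add: prod_topology_top_of_set)
  then have "continuous_map (prod_topology (top_of_set {0..1::real}) circle_top) B
      (\<lambda>(s, z). on_circle (\<lambda>t. (\<rho> \<circ> h) (s, t)) z)"
    by (rule continuous_map_on_circle_homotopy) (use loops in simp)
  then have "homotopic_with (\<lambda>_. True) circle_top B (on_circle (\<rho> \<circ> L)) (\<lambda>_. \<rho> (L 0))"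
    unfolding homotopic_with_def by (intro exI[of _ "\<lambda>(s, z). on_circle (\<lambda>t. (\<rho> \<circ> h) (s, t)) z"])
      (simp add: h0 h1 on_circle_def)
  then show ?thesis unfolding null_homotopic_def by blast
qed

text \<open>If e \<le> e' \<le> e with e \<noteq> e', concatenating the paths given by the sheets yields a closed lift
  of a closed dipath of B. It projects to a null-homotopic stream map on the directed circle,
  hence to a constant one, so by unique lifting the loop itself is constant.\<close>
lemma directed_loops_constant_imp_antisym:
  assumes sE: "is_stream E CE" and sB: "is_stream B CB"
    and usc: "universal_stream_covering E CE B CB \<rho>" and po: "path_ordered B CB"
    and const: "\<forall>f. stream_map circle_top circle_circ B CB f \<and> null_homotopic circle_top B f
       \<longrightarrow> (\<exists>c. \<forall>z\<in>topspace circle_top. f z = c)"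
  shows "antisym (CE (topspace E))"
proof (rule antisymI, rule ccontr)
  fix e e' assume ee: "(e, e') \<in> CE (topspace E)" "(e', e) \<in> CE (topspace E)" and ne: "e \<noteq> e'"
  have cov: "covering_map E B \<rho>" and sc: "stream_covering E CE B CB \<rho>"
    and scon: "simply_connected_space E" and \<rho>: "continuous_map E B \<rho>"
    using usc unfolding universal_stream_covering_def universal_covering_map_def covering_map_def by auto
  have chain: "(x, y) \<in> (\<Union>U\<in>{U. \<exists>V. stream_sheet E CE B CB \<rho> U V}. CE U)\<^sup>+"
    if "(x, y) \<in> CE (topspace E)" "x \<noteq> y" for x y
    using that stream_covering_circulation[OF sE sc] by auto
  obtain P where P: "pathin E P" "P 0 = e" "P 1 = e'" "dimonotone B CB (\<rho> \<circ> P)"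
    using sheet_chain_path[OF sE sB po chain[OF ee(1) ne]] by blast
  obtain Q where Q: "pathin E Q" "Q 0 = e'" "Q 1 = e" "dimonotone B CB (\<rho> \<circ> Q)"
    using sheet_chain_path[OF sE sB po chain[OF ee(2)]] ne by blast
  define L where "L = path_join P Q"
  have L: "pathin E L" "L 0 = e" "L 1 = e" "L (1/2) = e'" "dimonotone B CB (\<rho> \<circ> L)"
    using pathin_path_join[OF P(1) Q(1)] dimonotone_path_join[OF sB P(4) Q(4)] P Q
    unfolding L_def by (simp_all add: path_join_ends comp_path_join)
  have Lc: "continuous_map (top_of_set {0..1}) E L" using L(1) unfolding pathin_def .
  then have "stream_map circle_top circle_circ B CB (on_circle (\<rho> \<circ> L))"
    using stream_map_on_circle[OF sB continuous_map_compose[OF Lc \<rho>] L(5)] L by simp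
  moreover have "null_homotopic circle_top B (on_circle (\<rho> \<circ> L))"
    using null_homotopic_on_circle[OF scon \<rho> L(1)] L by simp
  ultimately obtain c where c: "\<And>z. z \<in> sphere 0 1 \<Longrightarrow> on_circle (\<rho> \<circ> L) z = c"
    using const topspace_circle by metis
  have on_loop: "on_circle (\<rho> \<circ> L) (ecirc t) = \<rho> (L t)" if "t \<in> {0..1}" for t
    using on_circle_ecirc[of "\<rho> \<circ> L" t] that L(2,3) by simp
  have proj_c: "\<rho> (L t) = c" if "t \<in> {0..1}" for t
    using on_loop[OF that] c[OF ecirc_sphere, of t] by simp
  have proj_const: "\<rho> (L t) = \<rho> e" if "t \<in> {0..1}" for t
    using proj_c[OF that] proj_c[of 0] L(2) by simp
  have const_e: "continuous_map (top_of_set {0..1::real}) E (\<lambda>_. e)"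
    using pathin_in_topspace[OF L(1), of 0] L(2) by simp
  have "L (1/2) = e"
  proof (rule covering_lift_unique[OF cov _ Lc const_e, where base = 0])
    show "connected_space (top_of_set {0..1::real})" by simp
    show "\<And>t. t \<in> topspace (top_of_set {0..1}) \<Longrightarrow> \<rho> (L t) = \<rho> e" using proj_const by simp
  qed (use L(2) in auto)
  then show False using L(4) ne by simp
qed

theorem mainTheorem3:
  fixes E :: "'e topology" and CE :: "'e set \<Rightarrow> ('e \<times> 'e) set"
    and B :: "'b topology" and CB :: "'b set \<Rightarrow> ('b \<times> 'b) set"
    and \<rho> :: "'e \<Rightarrow> 'b"
  assumes "is_stream E CE" and "is_stream B CB"
    and "universal_stream_covering E CE B CB \<rho>"
    and "path_ordered B CB"
  shows "antisym (CE (topspace E)) \<longleftrightarrow>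
    (\<forall>f. stream_map circle_top circle_circ B CB f \<and> null_homotopic circle_top B f
       \<longrightarrow> (\<exists>c. \<forall>z\<in>topspace circle_top. f z = c))"
  using antisym_imp_directed_loops_constant[OF assms(1,3)]
    directed_loops_constant_imp_antisym[OF assms] by blast

end
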